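(* For every annotated type $\theta$ and every ascending chain $u:\mathbb{N}\to[\![\theta^*]\!]_{\bot\star}$, if $\mathsf{safe}\,\theta\,(u_i)$ holds for all $i$, then $\mathsf{safe}\,\theta\,(\bigsqcup_i u_i)$ holds.
   Context: Fix sets $\mathsf{Principals}$, $\mathsf{Privileges}$. Types $t::=\mathtt{bool}\mid t_1\to t_2$. $\bot,\star$ are two distinct values that are neither booleans nor functions. For a cpo $C$ (poset with lubs of ascending chains), $C_{\bot\star}=C\cup\{\bot,\star\}$ with $u\le v$ iff $u=\bot$, or $u=v$, or $u,v\in C$ and $u\le v$ in $C$. $[\![\mathtt{bool}]\!]=\{\mathsf{true},\mathsf{false}\}$ ordered by equality; $\mathcal{P}(\mathsf{Privileges})$ ordered by equality; $[\![t_1\to t_2]\!]=\mathcal{P}(\mathsf{Privileges})\to[\![t_1]\!]\to[\![t_2]\!]_{\bot\star}$, continuous functions ordered pointwise (lubs pointwise). Annotated types: $\theta::=\mathtt{bool}\mid\theta_1\xrightarrow{\Pi}\theta_2$ with $\Pi\subseteq\mathsf{Privileges}$; erasure $\mathtt{bool}^*=\mathtt{bool}$, $(\theta_1\xrightarrow{\Pi}\theta_2)^*=\theta_1^*\to\theta_2^*$. The predicate $\mathsf{safe}\,\theta$ on $[\![\theta^*]\!]_{\bot\star}$: $\mathsf{safe}\,\theta(\bot)$ is true and $\mathsf{safe}\,\theta(\star)$ is false for all $\theta$; otherwise $\mathsf{safe}\,\mathtt{bool}(b)$ is true, and $\mathsf{safe}(\theta_1\xrightarrow{\Pi}\theta_2)(f)$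 iff for all $P\subseteq\mathsf{Privileges}$ and all $d\in[\![\theta_1^*]\!]$, $\Pi\subseteq P$ and $\mathsf{safe}\,\theta_1(d)$ imply $\mathsf{safe}\,\theta_2(fPd)$. *)

theory Defs
  imports Main
begin

datatype ty = TBool | TArr ty ty

datatype 'p aty = ABool | AArr "'p aty" "'p set" "'p aty"

fun erase :: "'p aty \<Rightarrow> ty" where
  "erase ABool = TBool"
| "erase (AArr th1 P th2) = TArr (erase th1) (erase th2)"

datatype 'a lift = Bot | Star | Val 'a

definition liftset :: "'a set \<Rightarrow> 'a lift set" where
  "liftset S = {Bot, Star} \<union> Val ` S"

definition lle :: "('a \<Rightarrow> 'a \<Rightarrow> bool) \<Rightarrow> 'a lift \<Rightarrow> 'a lift \<Rightarrow> bool" where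
  "lle le u v \<longleftrightarrow> u = Bot \<or> u = v \<or> (\<exists>a b. u = Val a \<and> v = Val b \<and> le a b)"

definition is_chain :: "'a set \<Rightarrow> ('a \<Rightarrow> 'a \<Rightarrow> bool) \<Rightarrow> (nat \<Rightarrow> 'a) \<Rightarrow> bool" where
  "is_chain S le c \<longleftrightarrow> (\<forall>i. c i \<in> S \<and> le (c i) (c (Suc i)))"

definition is_lub :: "'a set \<Rightarrow> ('a \<Rightarrow> 'a \<Rightarrow> bool) \<Rightarrow> (nat \<Rightarrow> 'a) \<Rightarrow> 'a \<Rightarrow> bool" where
  "is_lub S le c x \<longleftrightarrow> x \<in> S \<and> (\<forall>i. le (c i) x) \<and> (\<forall>y\<in>S. (\<forall>i. le (c i) y) \<longrightarrow> le x y)"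

definition cont_map :: "'a set \<Rightarrow> ('a \<Rightarrow> 'a \<Rightarrow> bool) \<Rightarrow> 'b set \<Rightarrow> ('b \<Rightarrow> 'b \<Rightarrow> bool)
    \<Rightarrow> ('a \<Rightarrow> 'b lift) \<Rightarrow> bool" where
  "cont_map S1 le1 S2 le2 g \<longleftrightarrow>
     (\<forall>x\<in>S1. \<forall>y\<in>S1. le1 x y \<longrightarrow> lle le2 (g x) (g y)) \<and>
     (\<forall>c x. is_chain S1 le1 c \<longrightarrow> is_lub S1 le1 c x \<longrightarrow>
        is_lub (liftset S2) (lle le2) (g \<circ> c) (g x))"

text \<open>Elements of P(Privileges) -> [[t1]] -> [[t2]]_{bot,star}, continuous (P(Privileges) is
  discretely ordered, so continuity is continuity of each f P); represented extensionally
  (value Bot outside the carrier of [[t1]]).\<close>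
definition valid_funs :: "'u set \<Rightarrow> ('u \<Rightarrow> 'u \<Rightarrow> bool) \<Rightarrow> 'u set \<Rightarrow> ('u \<Rightarrow> 'u \<Rightarrow> bool)
    \<Rightarrow> ('p set \<Rightarrow> 'u \<Rightarrow> 'u lift) set" where
  "valid_funs S1 le1 S2 le2 =
     {f. (\<forall>P. \<forall>d\<in>S1. f P d \<in> liftset S2) \<and> (\<forall>P. \<forall>d. d \<notin> S1 \<longrightarrow> f P d = Bot) \<and>
         (\<forall>P. cont_map S1 le1 S2 le2 (f P))}"

text \<open>The semantic cpos [[t]] (carrier and order), realised inside a universe type 'u via
  an encoding B of booleans and an encoding F of (semantic) functions.\<close>
fun sem :: "(bool \<Rightarrow> 'u) \<Rightarrow> (('p set \<Rightarrow> 'u \<Rightarrow> 'u lift) \<Rightarrow> 'u) \<Rightarrow> ty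
    \<Rightarrow> 'u set \<times> ('u \<Rightarrow> 'u \<Rightarrow> bool)" where
  "sem B F TBool = (range B, (\<lambda>x y. x = y))"
| "sem B F (TArr t1 t2) =
     (let V = valid_funs (fst (sem B F t1)) (snd (sem B F t1)) (fst (sem B F t2)) (snd (sem B F t2))
      in (F ` V,
          \<lambda>x y. \<exists>f\<in>V. \<exists>g\<in>V. x = F f \<and> y = F g \<and>
                 (\<forall>P. \<forall>d\<in>fst (sem B F t1). lle (snd (sem B F t2)) (f P d) (g P d))))"

definition sdom :: "(bool \<Rightarrow> 'u) \<Rightarrow> (('p set \<Rightarrow> 'u \<Rightarrow> 'u lift) \<Rightarrow> 'u) \<Rightarrow> ty \<Rightarrow> 'u set" where
  "sdom B F t = fst (sem B F t)"

definition ord :: "(bool \<Rightarrow> 'u) \<Rightarrow> (('p set \<Rightarrow> 'u \<Rightarrow> 'u lift) \<Rightarrow> 'u) \<Rightarrow> ty \<Rightarrow> 'u \<Rightarrow> 'u \<Rightarrow> bool" where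
  "ord B F t = snd (sem B F t)"

definition funs :: "(bool \<Rightarrow> 'u) \<Rightarrow> (('p set \<Rightarrow> 'u \<Rightarrow> 'u lift) \<Rightarrow> 'u) \<Rightarrow> ty \<Rightarrow> ty
    \<Rightarrow> ('p set \<Rightarrow> 'u \<Rightarrow> 'u lift) set" where
  "funs B F t1 t2 = valid_funs (sdom B F t1) (ord B F t1) (sdom B F t2) (ord B F t2)"

text \<open>The encodings must be faithful: B injective, F injective on the semantic functions of
  each arrow type. Then sdom B F t with ord B F t is (an isomorphic copy of) [[t]].\<close>
definition sem_model :: "(bool \<Rightarrow> 'u) \<Rightarrow> (('p set \<Rightarrow> 'u \<Rightarrow> 'u lift) \<Rightarrow> 'u) \<Rightarrow> bool" where
  "sem_model B F \<longleftrightarrow> inj B \<and> (\<forall>t1 t2. inj_on F (funs B F t1 t2))"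

definition app :: "(bool \<Rightarrow> 'u) \<Rightarrow> (('p set \<Rightarrow> 'u \<Rightarrow> 'u lift) \<Rightarrow> 'u) \<Rightarrow> ty \<Rightarrow> ty
    \<Rightarrow> 'u \<Rightarrow> 'p set \<Rightarrow> 'u \<Rightarrow> 'u lift" where
  "app B F t1 t2 x P d = (THE r. \<exists>f\<in>funs B F t1 t2. x = F f \<and> r = f P d)"

fun safe :: "(bool \<Rightarrow> 'u) \<Rightarrow> (('p set \<Rightarrow> 'u \<Rightarrow> 'u lift) \<Rightarrow> 'u) \<Rightarrow> 'p aty \<Rightarrow> 'u lift \<Rightarrow> bool" where
  "safe B F th Bot = True"
| "safe B F th Star = False"
| "safe B F ABool (Val b) = True"
| "safe B F (AArr th1 Pi th2) (Val f) =
     (\<forall>P. \<forall>d\<in>sdom B F (erase th1). Pi \<subseteq> P \<longrightarrow> safe B F th1 (Val d) \<longrightarrow>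
        safe B F th2 (app B F (erase th1) (erase th2) f P d))"

end

theory Submission
  imports Defs
begin

text \<open>Safe elements are never Star, so neither is the lub
  of a chain of safe elements: otherwise every element would be Bot and the lub would be Bot.
  If the lub is a value, the chain eventually consists of values, and at an arrow type its lub
  is computed pointwise; this needs every lifted domain to be a cpo, so that pointwise lubs
  exist, and the fact that a pointwise lub of continuous functions is continuous. Applying the
  lub to a safe argument thus gives the lub of a chain of safe results, which is safe by the
  induction hypothesis.\<close>

lemma lle_refl [simp]: "lle le x x"
  by (simp add: lle_def)

lemma lle_Bot_iff [simp]: "lle le Bot x" "lle le x Bot \<longleftrightarrow> x = Bot"
  by (auto simp: lle_def)

lemma lle_Star_iff [simp]: "lle le Star y \<longleftrightarrow> y = Star"
  by (auto simp: lle_def)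

lemma lle_Val_Star [simp]: "\<not> lle le (Val a) Star"
  by (simp add: lle_def)

lemma lle_Val_Val [simp]: "lle le (Val a) (Val b) \<longleftrightarrow> a = b \<or> le a b"
  by (auto simp: lle_def)

lemma lle_ValE:
  assumes "lle le (Val a) y"
  obtains b where "y = Val b"
  using assms by (auto simp: lle_def)

lemma liftset_simps [simp]: "Bot \<in> liftset S" "Star \<in> liftset S" "Val a \<in> liftset S \<longleftrightarrow> a \<in> S"
  by (auto simp: liftset_def)

lemma transp_lle: "transp le \<Longrightarrow> transp (lle le)"
  unfolding lle_def by (rule transpI) (auto dest: transpD)

lemma antisymp_lle: "antisymp le \<Longrightarrow> antisymp (lle le)"
  unfolding lle_def by (rule antisympI) (auto dest: antisympD)

lemma reflp_on_lle: "reflp_on S (lle le)"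
  by (simp add: reflp_onI)

lemma is_chain_mono:
  assumes "transp le" and "reflp_on S le" and "is_chain S le c" and "i \<le> j"
  shows "le (c i) (c j)"
  using \<open>i \<le> j\<close>
proof (induction j rule: dec_induct)
  case base
  from assms(2,3) show ?case by (simp add: is_chain_def reflp_onD)
next
  case (step n)
  with assms(1,3) show ?case unfolding is_chain_def by (blast dest: transpD)
qed

lemma is_chain_lift_mono:
  "transp le \<Longrightarrow> is_chain (liftset S) (lle le) c \<Longrightarrow> i \<le> j \<Longrightarrow> lle le (c i) (c j)"
  by (rule is_chain_mono[OF transp_lle reflp_on_lle])

lemma is_lub_upper: "is_lub S le c x \<Longrightarrow> le (c i) x"
  unfolding is_lub_def by blast

lemma is_lub_least: "is_lub S le c x \<Longrightarrow> y \<in> S \<Longrightarrow> (\<And>i. le (c i) y) \<Longrightarrow> le x y"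
  unfolding is_lub_def by blast

lemma is_lub_unique: "antisymp le \<Longrightarrow> is_lub S le c x \<Longrightarrow> is_lub S le c y \<Longrightarrow> x = y"
  unfolding is_lub_def by (blast dest: antisympD)

lemma lift_chain_tail:
  assumes "transp le" and "reflp_on S le"
    and ch: "is_chain (liftset S) (lle le) c" and "c n = Val b"
  obtains v where "\<And>k. c (n + k) = Val (v k)" and "is_chain S le v"
proof -
  have "\<exists>a. c (n + k) = Val a" for k
    using is_chain_lift_mono[OF assms(1) ch, of n "n + k"] \<open>c n = Val b\<close> by (auto elim: lle_ValE)
  then obtain v where v: "\<And>k. c (n + k) = Val (v k)" by metis
  have vS: "v k \<in> S" for k
    using ch v[of k] unfolding is_chain_def by (metis liftset_simps(3))
  have "lle le (Val (v k)) (Val (v (Suc k)))" for k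
    using ch v[of k] v[of "Suc k"] unfolding is_chain_def by (metis add_Suc_right)
  then have "le (v k) (v (Suc k))" for k
    using vS \<open>reflp_on S le\<close> by (metis lle_Val_Val reflp_onD)
  with vS have "is_chain S le v"
    unfolding is_chain_def by blast
  with v that show ?thesis by blast
qed

lemma lift_lub_Val_iff:
  assumes "transp le" and "reflp_on S le"
    and ch: "is_chain (liftset S) (lle le) c" and v: "\<And>k. c (n + k) = Val (v k)"
  shows "is_lub (liftset S) (lle le) c (Val a) \<longleftrightarrow> is_lub S le v a"
proof -
  have vS: "v k \<in> S" for k
    using ch v[of k] unfolding is_chain_def by (metis liftset_simps(3))
  have le_Val_iff: "lle le (Val x) (Val y) \<longleftrightarrow> le x y" if "x \<in> S" for x y
    using that \<open>reflp_on S le\<close> by (auto dest: reflp_onD)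
  \<comment> \<open>Below index n the chain lies under c n = Val (v 0), so only its tail matters.\<close>
  have ub_iff: "(\<forall>i. lle le (c i) y) \<longleftrightarrow> (\<forall>k. lle le (Val (v k)) y)" for y
  proof
    assume ub: "\<forall>k. lle le (Val (v k)) y"
    show "\<forall>i. lle le (c i) y"
    proof
      fix i
      show "lle le (c i) y"
      proof (cases "i \<le> n")
        case True
        then have "lle le (c i) (c n)"
          by (rule is_chain_lift_mono[OF assms(1) ch])
        with ub v[of 0] show ?thesis
          using transp_lle[OF assms(1)] by (auto dest: transpD)
      next
        case False
        then have "i = n + (i - n)" by simp
        with ub v show ?thesis by metis
      qed
    qed
  qed (use v in metis)
  show ?thesis
  proof
    assume lub: "is_lub (liftset S) (lle le) c (Val a)"
    then have "a \<in> S" and "\<forall>k. lle le (Val (v k)) (Val a)"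
      using ub_iff unfolding is_lub_def by auto
    moreover have "le a y" if "y \<in> S" and "\<forall>k. le (v k) y" for y
      using lub that ub_iff[of "Val y"] le_Val_iff vS unfolding is_lub_def by auto
    ultimately show "is_lub S le v a"
      unfolding is_lub_def using le_Val_iff vS by auto
  next
    assume lub: "is_lub S le v a"
    have "lle le (Val a) y" if "y \<in> liftset S" and "\<forall>k. lle le (Val (v k)) y" for y
    proof -
      from that obtain b where y: "y = Val b" by (metis lle_ValE)
      with that have "b \<in> S" and "\<forall>k. le (v k) b"
        using le_Val_iff vS by auto
      with lub y show ?thesis unfolding is_lub_def by simp
    qed
    with lub show "is_lub (liftset S) (lle le) c (Val a)"
      using ub_iff unfolding is_lub_def by auto
  qed
qed

lemma lift_lub_not_Star:
  assumes lub: "is_lub (liftset S) (lle le) c x" and "\<forall>i. c i \<noteq> Star"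
  shows "x \<noteq> Star"
proof
  assume "x = Star"
  with lub \<open>\<forall>i. c i \<noteq> Star\<close> have "\<forall>i. c i = Bot"
    unfolding is_lub_def by (metis lift.exhaust lle_Val_Star)
  with lub have "lle le x Bot" by (intro is_lub_least[OF lub]) auto
  with \<open>x = Star\<close> show False by simp
qed

lemma lift_lub_ValE:
  assumes lub: "is_lub (liftset S) (lle le) c (Val a)"
  obtains n b where "c n = Val b"
proof (cases "\<forall>i. c i = Bot")
  case True
  then have "lle le (Val a) Bot" by (intro is_lub_least[OF lub]) auto
  then show ?thesis by simp
next
  case False
  then obtain n where "c n \<noteq> Bot" by blast
  moreover have "c n \<noteq> Star"
    using is_lub_upper[OF lub, of n] by auto
  ultimately show ?thesis using that by (cases "c n") auto
qed

lemma lift_has_lubs: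
  assumes "transp le" and "reflp_on S le"
    and lubs: "\<And>v. is_chain S le v \<Longrightarrow> \<exists>a. is_lub S le v a"
    and ch: "is_chain (liftset S) (lle le) c"
  shows "\<exists>x. is_lub (liftset S) (lle le) c x"
proof (cases "\<exists>n. c n \<noteq> Bot")
  case False
  then have "is_lub (liftset S) (lle le) c Bot" unfolding is_lub_def by simp
  then show ?thesis ..
next
  case True
  then obtain n where "c n \<noteq> Bot" by blast
  then consider "c n = Star" | b where "c n = Val b" by (cases "c n") auto
  then show ?thesis
  proof cases
    case 1
    \<comment> \<open>Star is an upper bound: it is above the earlier elements and equal to the later ones.\<close>
    have "lle le (c i) Star" for i
      using is_chain_lift_mono[OF assms(1) ch, of i n] is_chain_lift_mono[OF assms(1) ch, of n i] 1
      by (cases "i \<le> n") auto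
    with 1 have "is_lub (liftset S) (lle le) c Star"
      unfolding is_lub_def by (metis lle_Star_iff liftset_simps(2))
    then show ?thesis ..
  next
    case 2
    then obtain v where v: "\<And>k. c (n + k) = Val (v k)" and "is_chain S le v"
      using lift_chain_tail[OF assms(1,2) ch] by blast
    then obtain a where "is_lub S le v a" using lubs by blast
    then show ?thesis using lift_lub_Val_iff[OF assms(1,2) ch v] by blast
  qed
qed

lemma sdom_TBool [simp]: "sdom B F TBool = range B"
  by (simp add: sdom_def)

lemma ord_TBool [simp]: "ord B F TBool = (=)"
  by (simp add: ord_def)

lemma sdom_TArr: "sdom B F (TArr t1 t2) = F ` funs B F t1 t2"
  by (simp add: sdom_def ord_def funs_def Let_def)

lemma ord_TArr:
  "ord B F (TArr t1 t2) x y \<longleftrightarrow> (\<exists>f\<in>funs B F t1 t2. \<exists>g\<in>funs B F t1 t2. x = F f \<and> y = F g \<and>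
     (\<forall>P. \<forall>d\<in>sdom B F t1. lle (ord B F t2) (f P d) (g P d)))"
  by (simp add: sdom_def ord_def funs_def Let_def)

lemma mem_funs_iff:
  "f \<in> funs B F t1 t2 \<longleftrightarrow>
     (\<forall>P. \<forall>d\<in>sdom B F t1. f P d \<in> liftset (sdom B F t2)) \<and>
     (\<forall>P d. d \<notin> sdom B F t1 \<longrightarrow> f P d = Bot) \<and>
     (\<forall>P. cont_map (sdom B F t1) (ord B F t1) (sdom B F t2) (ord B F t2) (f P))"
  by (simp add: funs_def valid_funs_def)

lemma app_encode:
  assumes "sem_model B F" and "f \<in> funs B F t1 t2"
  shows "app B F t1 t2 (F f) = f"
proof (intro ext)
  fix P d
  have "inj_on F (funs B F t1 t2)"
    using \<open>sem_model B F\<close> by (simp add: sem_model_def)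
  with \<open>f \<in> funs B F t1 t2\<close> show "app B F t1 t2 (F f) P d = f P d"
    unfolding app_def by (rule_tac the_equality) (auto dest: inj_onD)
qed

lemma sdom_TArrE:
  assumes "x \<in> sdom B F (TArr t1 t2)"
  obtains f where "f \<in> funs B F t1 t2" and "x = F f"
  using assms by (auto simp: sdom_TArr)

lemma app_mem_funs:
  "sem_model B F \<Longrightarrow> x \<in> sdom B F (TArr t1 t2) \<Longrightarrow> app B F t1 t2 x \<in> funs B F t1 t2"
  by (metis sdom_TArrE app_encode)

lemma encode_app:
  "sem_model B F \<Longrightarrow> x \<in> sdom B F (TArr t1 t2) \<Longrightarrow> F (app B F t1 t2 x) = x"
  by (metis sdom_TArrE app_encode)

lemma app_mem_liftset:
  "sem_model B F \<Longrightarrow> x \<in> sdom B F (TArr t1 t2) \<Longrightarrow> d \<in> sdom B F t1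
    \<Longrightarrow> app B F t1 t2 x P d \<in> liftset (sdom B F t2)"
  by (drule (1) app_mem_funs) (simp add: mem_funs_iff)

lemma ord_TArr_iff:
  assumes "sem_model B F"
  shows "ord B F (TArr t1 t2) x y \<longleftrightarrow> x \<in> sdom B F (TArr t1 t2) \<and> y \<in> sdom B F (TArr t1 t2) \<and>
    (\<forall>P. \<forall>d\<in>sdom B F t1. lle (ord B F t2) (app B F t1 t2 x P d) (app B F t1 t2 y P d))"
  unfolding ord_TArr sdom_TArr
  by (auto simp: app_encode[OF assms]) (metis app_encode[OF assms])

lemma transp_ord: "sem_model B F \<Longrightarrow> transp (ord B F t)"
proof (induction t)
  case TBool
  show ?case by (simp add: transpI)
next
  case (TArr t1 t2)
  then show ?case
    unfolding ord_TArr_iff[OF TArr.prems] using transp_lle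
    by (intro transpI) (blast dest: transpD)
qed

lemma antisymp_ord: "sem_model B F \<Longrightarrow> antisymp (ord B F t)"
proof (induction t)
  case TBool
  show ?case by (simp add: antisympI)
next
  case (TArr t1 t2)
  show ?case
  proof (rule antisympI)
    fix x y
    assume "ord B F (TArr t1 t2) x y" and "ord B F (TArr t1 t2) y x"
    then have x: "x \<in> sdom B F (TArr t1 t2)" and y: "y \<in> sdom B F (TArr t1 t2)"
      and "\<forall>P. \<forall>d\<in>sdom B F t1. app B F t1 t2 x P d = app B F t1 t2 y P d"
      unfolding ord_TArr_iff[OF TArr.prems] using antisymp_lle[OF TArr.IH(2)[OF TArr.prems]]
      by (blast dest: antisympD)+
    \<comment> \<open>Off the carrier of t1 both functions are Bot.\<close>
    then have "app B F t1 t2 x = app B F t1 t2 y"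
      using app_mem_funs[OF TArr.prems x] app_mem_funs[OF TArr.prems y]
      unfolding mem_funs_iff by (metis ext)
    then show "x = y"
      using encode_app[OF TArr.prems x] encode_app[OF TArr.prems y] by metis
  qed
qed

lemma reflp_on_ord: "sem_model B F \<Longrightarrow> reflp_on (sdom B F t) (ord B F t)"
  by (cases t) (auto intro: reflp_onI simp: ord_TArr_iff)

lemma is_chain_app:
  assumes "sem_model B F" and ch: "is_chain (sdom B F (TArr t1 t2)) (ord B F (TArr t1 t2)) v"
    and "d \<in> sdom B F t1"
  shows "is_chain (liftset (sdom B F t2)) (lle (ord B F t2)) (\<lambda>i. app B F t1 t2 (v i) P d)"
  using ch app_mem_liftset[OF assms(1) _ assms(3)]
  unfolding is_chain_def ord_TArr_iff[OF assms(1)] using assms(3) by blast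

lemma cont_map_lub:
  assumes "transp le2" and cont: "\<And>i. cont_map S1 le1 S2 le2 (h i)"
    and lub: "\<And>d. d \<in> S1 \<Longrightarrow> is_lub (liftset S2) (lle le2) (\<lambda>i. h i d) (k d)"
  shows "cont_map S1 le1 S2 le2 k"
proof -
  have trans: "lle le2 x y \<Longrightarrow> lle le2 y z \<Longrightarrow> lle le2 x z" for x y z
    using transp_lle[OF \<open>transp le2\<close>] by (blast dest: transpD)
  have k_mem: "k d \<in> liftset S2" if "d \<in> S1" for d
    using lub[OF that] unfolding is_lub_def by blast
  have mono: "lle le2 (k a) (k b)" if "a \<in> S1" "b \<in> S1" "le1 a b" for a b
  proof (rule is_lub_least[OF lub[OF \<open>a \<in> S1\<close>] k_mem[OF \<open>b \<in> S1\<close>]])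
    fix i
    have "lle le2 (h i a) (h i b)"
      using cont[of i] that unfolding cont_map_def by blast
    then show "lle le2 (h i a) (k b)"
      using is_lub_upper[OF lub[OF \<open>b \<in> S1\<close>], of i] by (rule trans)
  qed
  \<comment> \<open>Lubs commute: k y and the lub of k o c are both the double lub of h i (c j).\<close>
  have "is_lub (liftset S2) (lle le2) (k \<circ> c) (k y)"
    if c: "is_chain S1 le1 c" and y: "is_lub S1 le1 c y" for c y
  proof -
    have "y \<in> S1" and cS: "\<And>j. c j \<in> S1"
      using c y unfolding is_chain_def is_lub_def by blast+
    have "lle le2 (k y) z" if z: "z \<in> liftset S2" and ub: "\<forall>j. lle le2 (k (c j)) z" for z
    proof (rule is_lub_least[OF lub[OF \<open>y \<in> S1\<close>] z])
      fix i
      have hi: "is_lub (liftset S2) (lle le2) (h i \<circ> c) (h i y)"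
        using cont[of i] c y unfolding cont_map_def by blast
      show "lle le2 (h i y) z"
      proof (rule is_lub_least[OF hi z])
        fix j
        show "lle le2 ((h i \<circ> c) j) z"
          using trans[OF is_lub_upper[OF lub[OF cS[of j]]]] ub by simp
      qed
    qed
    with mono[OF cS \<open>y \<in> S1\<close>] y k_mem[OF \<open>y \<in> S1\<close>] show ?thesis
      unfolding is_lub_def by auto
  qed
  with mono show ?thesis
    unfolding cont_map_def by blast
qed

lemma ex_pointwise_lub:
  assumes sm: "sem_model B F"
    and lubs: "\<And>c. is_chain (liftset (sdom B F t2)) (lle (ord B F t2)) c
      \<Longrightarrow> \<exists>x. is_lub (liftset (sdom B F t2)) (lle (ord B F t2)) c x"
    and ch: "is_chain (sdom B F (TArr t1 t2)) (ord B F (TArr t1 t2)) v"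
  obtains g where "g \<in> funs B F t1 t2"
    and "\<And>P d. d \<in> sdom B F t1 \<Longrightarrow>
      is_lub (liftset (sdom B F t2)) (lle (ord B F t2)) (\<lambda>i. app B F t1 t2 (v i) P d) (g P d)"
proof -
  let ?lub = "is_lub (liftset (sdom B F t2)) (lle (ord B F t2))"
  define g where "g P d = (if d \<in> sdom B F t1 then Eps (?lub (\<lambda>i. app B F t1 t2 (v i) P d)) else Bot)"
    for P d
  have vS: "v i \<in> sdom B F (TArr t1 t2)" for i
    using ch unfolding is_chain_def by blast
  have g_lub: "?lub (\<lambda>i. app B F t1 t2 (v i) P d) (g P d)" if d: "d \<in> sdom B F t1" for P d
  proof -
    obtain l where "?lub (\<lambda>i. app B F t1 t2 (v i) P d) l"
      using lubs[OF is_chain_app[OF sm ch d]] by blast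
    then have "?lub (\<lambda>i. app B F t1 t2 (v i) P d) (Eps (?lub (\<lambda>i. app B F t1 t2 (v i) P d)))"
      by (rule someI)
    with d show ?thesis
      unfolding g_def by simp
  qed
  have "g \<in> funs B F t1 t2"
    unfolding mem_funs_iff
  proof (intro conjI allI ballI impI)
    show "g P d \<in> liftset (sdom B F t2)" if "d \<in> sdom B F t1" for P d
      using g_lub[OF that] unfolding is_lub_def by blast
    show "g P d = Bot" if "d \<notin> sdom B F t1" for P d
      using that unfolding g_def by simp
    show "cont_map (sdom B F t1) (ord B F t1) (sdom B F t2) (ord B F t2) (g P)" for P
    proof (rule cont_map_lub[OF transp_ord[OF sm]])
      show "cont_map (sdom B F t1) (ord B F t1) (sdom B F t2) (ord B F t2) (app B F t1 t2 (v i) P)" for i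
        using app_mem_funs[OF sm vS[of i]] unfolding mem_funs_iff by blast
    qed (rule g_lub)
  qed
  with g_lub that show ?thesis by blast
qed

lemma is_lub_TArr_if_pointwise:
  assumes sm: "sem_model B F"
    and vS: "\<And>i. v i \<in> sdom B F (TArr t1 t2)" and g: "g \<in> funs B F t1 t2"
    and g_lub: "\<And>P d. d \<in> sdom B F t1 \<Longrightarrow>
      is_lub (liftset (sdom B F t2)) (lle (ord B F t2)) (\<lambda>i. app B F t1 t2 (v i) P d) (g P d)"
  shows "is_lub (sdom B F (TArr t1 t2)) (ord B F (TArr t1 t2)) v (F g)"
proof -
  have Fg: "F g \<in> sdom B F (TArr t1 t2)"
    using g by (simp add: sdom_TArr)
  have app_Fg: "app B F t1 t2 (F g) = g"
    using app_encode[OF sm g] .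
  have "ord B F (TArr t1 t2) (F g) y"
    if y: "y \<in> sdom B F (TArr t1 t2)" and ub: "\<forall>i. ord B F (TArr t1 t2) (v i) y" for y
  proof -
    have "lle (ord B F t2) (g P d) (app B F t1 t2 y P d)" if d: "d \<in> sdom B F t1" for P d
      using ub d by (intro is_lub_least[OF g_lub[OF d] app_mem_liftset[OF sm y d]])
        (simp add: ord_TArr_iff[OF sm])
    with Fg y app_Fg show ?thesis
      by (simp add: ord_TArr_iff[OF sm])
  qed
  moreover have "ord B F (TArr t1 t2) (v i) (F g)" for i
    using vS Fg app_Fg is_lub_upper[OF g_lub] by (simp add: ord_TArr_iff[OF sm])
  ultimately show ?thesis
    using Fg unfolding is_lub_def by blast
qed

lemma lift_sdom_has_lubs:
  assumes sm: "sem_model B F"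
    and "is_chain (liftset (sdom B F t)) (lle (ord B F t)) c"
  shows "\<exists>x. is_lub (liftset (sdom B F t)) (lle (ord B F t)) c x"
  using assms(2)
proof (induction t arbitrary: c)
  case TBool
  have "is_lub (range B) (=) v (v 0)" if "is_chain (range B) (=) v" for v :: "nat \<Rightarrow> 'a"
  proof -
    have "v i = v 0" for i
      by (induction i) (use that in \<open>simp_all add: is_chain_def\<close>)
    with that show ?thesis
      unfolding is_chain_def is_lub_def by auto
  qed
  then have "\<exists>a. is_lub (sdom B F TBool) (ord B F TBool) v a"
    if "is_chain (sdom B F TBool) (ord B F TBool) v" for v
    using that by auto
  then show ?case
    using lift_has_lubs[OF transp_ord[OF sm] reflp_on_ord[OF sm] _ TBool] by blast
next
  case (TArr t1 t2)
  have "\<exists>a. is_lub (sdom B F (TArr t1 t2)) (ord B F (TArr t1 t2)) v a"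
    if ch: "is_chain (sdom B F (TArr t1 t2)) (ord B F (TArr t1 t2)) v" for v
  proof -
    obtain g where "g \<in> funs B F t1 t2" and "\<And>P d. d \<in> sdom B F t1 \<Longrightarrow>
      is_lub (liftset (sdom B F t2)) (lle (ord B F t2)) (\<lambda>i. app B F t1 t2 (v i) P d) (g P d)"
      using ex_pointwise_lub[OF sm TArr.IH(2) ch] by blast
    with ch show ?thesis
      unfolding is_chain_def by (blast intro: is_lub_TArr_if_pointwise[OF sm])
  qed
  then show ?case
    using lift_has_lubs[OF transp_ord[OF sm] reflp_on_ord[OF sm] _ TArr.prems] by blast
qed

lemma is_lub_TArr_pointwise:
  assumes sm: "sem_model B F"
    and ch: "is_chain (sdom B F (TArr t1 t2)) (ord B F (TArr t1 t2)) v"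
    and lub: "is_lub (sdom B F (TArr t1 t2)) (ord B F (TArr t1 t2)) v a"
    and d: "d \<in> sdom B F t1"
  shows "is_lub (liftset (sdom B F t2)) (lle (ord B F t2)) (\<lambda>i. app B F t1 t2 (v i) P d) (app B F t1 t2 a P d)"
proof -
  obtain g where g: "g \<in> funs B F t1 t2" and g_lub: "\<And>P d. d \<in> sdom B F t1 \<Longrightarrow>
      is_lub (liftset (sdom B F t2)) (lle (ord B F t2)) (\<lambda>i. app B F t1 t2 (v i) P d) (g P d)"
    using ex_pointwise_lub[OF sm lift_sdom_has_lubs[OF sm] ch] by blast
  have "is_lub (sdom B F (TArr t1 t2)) (ord B F (TArr t1 t2)) v (F g)"
    using ch g g_lub unfolding is_chain_def by (blast intro: is_lub_TArr_if_pointwise[OF sm])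
  with lub have "a = F g"
    by (rule is_lub_unique[OF antisymp_ord[OF sm]])
  with g_lub[OF d] show ?thesis
    using app_encode[OF sm g] by simp
qed

theorem lemma1:
  fixes B :: "bool \<Rightarrow> 'u" and F :: "('p set \<Rightarrow> 'u \<Rightarrow> 'u lift) \<Rightarrow> 'u"
    and th :: "'p aty" and u :: "nat \<Rightarrow> 'u lift" and x :: "'u lift"
  assumes "sem_model B F"
    and "is_chain (liftset (sdom B F (erase th))) (lle (ord B F (erase th))) u"
    and "is_lub (liftset (sdom B F (erase th))) (lle (ord B F (erase th))) u x"
    and "\<forall>i. safe B F th (u i)"
  shows "safe B F th x"
  using assms(2-4)
proof (induction th arbitrary: u x)
  case ABool
  have "\<forall>i. u i \<noteq> Star"
    using ABool.prems(3) by (metis safe.simps(2))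
  with ABool.prems(2) show ?case
    by (cases x) (auto dest: lift_lub_not_Star)
next
  case (AArr th1 Pi th2)
  let ?t1 = "erase th1" and ?t2 = "erase th2"
  note sm = \<open>sem_model B F\<close>
  have "\<forall>i. u i \<noteq> Star"
    using AArr.prems(3) by (metis safe.simps(2))
  with AArr.prems(2) have not_Star: "x \<noteq> Star"
    by (rule lift_lub_not_Star)
  show ?case
  proof (cases x)
    case (Val a)
    with AArr.prems(2) obtain n b where "u n = Val b"
      by (auto elim: lift_lub_ValE)
    have ch_u: "is_chain (liftset (sdom B F (TArr ?t1 ?t2))) (lle (ord B F (TArr ?t1 ?t2))) u"
      using AArr.prems(1) by simp
    obtain v where v: "\<And>k. u (n + k) = Val (v k)"
      and ch: "is_chain (sdom B F (TArr ?t1 ?t2)) (ord B F (TArr ?t1 ?t2)) v"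
      using lift_chain_tail[OF transp_ord[OF sm] reflp_on_ord[OF sm] ch_u \<open>u n = Val b\<close>] by blast
    have lub: "is_lub (sdom B F (TArr ?t1 ?t2)) (ord B F (TArr ?t1 ?t2)) v a"
      using lift_lub_Val_iff[OF transp_ord[OF sm] reflp_on_ord[OF sm] ch_u v] AArr.prems(2) Val
      by simp
    have "safe B F th2 (app B F ?t1 ?t2 a P d)"
      if d: "d \<in> sdom B F ?t1" and "Pi \<subseteq> P" and "safe B F th1 (Val d)" for P d
    proof (rule AArr.IH(2)[OF is_chain_app[OF sm ch d] is_lub_TArr_pointwise[OF sm ch lub d]])
      show "\<forall>k. safe B F th2 (app B F ?t1 ?t2 (v k) P d)"
        using AArr.prems(3) v that by (metis safe.simps(4))
    qed
    with Val show ?thesis by simp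
  qed (use not_Star in simp_all)
qed

end
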